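(* For $1\le i\le n$ let $f_i:\mathbb{Z}\to\mathbb{R}$ be bounded below and such that $(\mathbb{Z},f_i)$ is a one-dimensional Ameso($0$) pair, let $a_1,\dots,a_n\ge 0$, and define $g:\mathbb{Z}^n\to\mathbb{R}$ by $g(\vec y)=\sum_{i=1}^n a_if_i(y_i)$. Then $(\mathbb{Z}^n,g)$ is an Ameso($0$) pair.
   Context: Floors and ceilings of vectors are taken componentwise. A set $D^n\subseteq\mathbb{Z}^n$ is an Ameso set if $\lceil(\vec x+\vec y)/2\rceil,\lfloor(\vec x+\vec y)/2\rfloor\in D^n$ for all $\vec x,\vec y\in D^n$. For $C\ge 0$, $(D^n,f)$ is an Ameso($C$) pair if $D^n$ is an Ameso set, $f:D^n\to\mathbb{R}$ is bounded below, and $f(\vec x)+f(\vec y)+C\ge f(\lceil(\vec x+\vec y)/2\rceil)+f(\lfloor(\vec x+\vec y)/2\rfloor)$ for all $\vec x,\vec y\in D^n$. *)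

theory Defs
  imports "HOL-Analysis.Analysis"
begin

definition vmid_floor :: "int ^ 'n \<Rightarrow> int ^ 'n \<Rightarrow> int ^ 'n" where
  "vmid_floor x y = (\<chi> i. \<lfloor>(real_of_int (x $ i) + real_of_int (y $ i)) / 2\<rfloor>)"

definition vmid_ceil :: "int ^ 'n \<Rightarrow> int ^ 'n \<Rightarrow> int ^ 'n" where
  "vmid_ceil x y = (\<chi> i. \<lceil>(real_of_int (x $ i) + real_of_int (y $ i)) / 2\<rceil>)"

definition ameso_set :: "(int ^ 'n) set \<Rightarrow> bool" where
  "ameso_set D \<longleftrightarrow> (\<forall>x\<in>D. \<forall>y\<in>D. vmid_ceil x y \<in> D \<and> vmid_floor x y \<in> D)"

definition ameso_pair :: "real \<Rightarrow> (int ^ 'n) set \<Rightarrow> (int ^ 'n \<Rightarrow> real) \<Rightarrow> bool" where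
  "ameso_pair C D f \<longleftrightarrow> ameso_set D \<and> (\<exists>m. \<forall>x\<in>D. m \<le> f x) \<and>
     (\<forall>x\<in>D. \<forall>y\<in>D. f x + f y + C \<ge> f (vmid_ceil x y) + f (vmid_floor x y))"

definition ameso_set1 :: "int set \<Rightarrow> bool" where
  "ameso_set1 D \<longleftrightarrow> (\<forall>x\<in>D. \<forall>y\<in>D.
     \<lceil>(real_of_int x + real_of_int y) / 2\<rceil> \<in> D \<and> \<lfloor>(real_of_int x + real_of_int y) / 2\<rfloor> \<in> D)"

definition ameso_pair1 :: "real \<Rightarrow> int set \<Rightarrow> (int \<Rightarrow> real) \<Rightarrow> bool" where
  "ameso_pair1 C D f \<longleftrightarrow> ameso_set1 D \<and> (\<exists>m. \<forall>x\<in>D. m \<le> f x) \<and>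
     (\<forall>x\<in>D. \<forall>y\<in>D. f x + f y + C \<ge>
        f \<lceil>(real_of_int x + real_of_int y) / 2\<rceil> + f \<lfloor>(real_of_int x + real_of_int y) / 2\<rfloor>)"

end

theory Submission
  imports Defs
begin

text \<open>The midpoint rounding acts coordinatewise, so both conditions defining an Ameso pair split
  into one-dimensional conditions on the coordinates. A separable function with nonnegative
  weights therefore inherits the Ameso inequality by summing the coordinate inequalities, the
  constants adding up with the same weights.\<close>

lemma vmid_ceil_nth [simp]:
  "vmid_ceil x y $ i = \<lceil>(real_of_int (x $ i) + real_of_int (y $ i)) / 2\<rceil>"
  by (simp add: vmid_ceil_def)

lemma vmid_floor_nth [simp]:
  "vmid_floor x y $ i = \<lfloor>(real_of_int (x $ i) + real_of_int (y $ i)) / 2\<rfloor>"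
  by (simp add: vmid_floor_def)

lemma ameso_set_box:
  assumes "\<And>i. ameso_set1 (D i)"
  shows "ameso_set {x :: int ^ 'n. \<forall>i. x $ i \<in> D i}"
  using assms by (simp add: ameso_set_def ameso_set1_def)

lemma ameso_pair_weighted_sum:
  fixes f :: "'n::finite \<Rightarrow> int \<Rightarrow> real" and a C :: "'n \<Rightarrow> real"
  assumes pairs: "\<And>i. ameso_pair1 (C i) (D i) (f i)"
    and nonneg: "\<And>i. a i \<ge> 0"
  shows "ameso_pair (\<Sum>i\<in>UNIV. a i * C i) {x :: int ^ 'n. \<forall>i. x $ i \<in> D i}
           (\<lambda>y. \<Sum>i\<in>UNIV. a i * f i (y $ i))"
proof -
  let ?B = "{x :: int ^ 'n. \<forall>i. x $ i \<in> D i}"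
  obtain m where m: "\<And>i z. z \<in> D i \<Longrightarrow> m i \<le> f i z"
    using pairs unfolding ameso_pair1_def by metis
  have bounded: "(\<Sum>i\<in>UNIV. a i * m i) \<le> (\<Sum>i\<in>UNIV. a i * f i (x $ i))" if "x \<in> ?B" for x
    using that by (intro sum_mono mult_left_mono m nonneg) auto
  have midpoint: "(\<Sum>i\<in>UNIV. a i * f i (vmid_ceil x y $ i)) + (\<Sum>i\<in>UNIV. a i * f i (vmid_floor x y $ i))
      \<le> (\<Sum>i\<in>UNIV. a i * f i (x $ i)) + (\<Sum>i\<in>UNIV. a i * f i (y $ i)) + (\<Sum>i\<in>UNIV. a i * C i)"
    if "x \<in> ?B" "y \<in> ?B" for x y
  proof -
    have "a i * (f i (vmid_ceil x y $ i) + f i (vmid_floor x y $ i))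
        \<le> a i * (f i (x $ i) + f i (y $ i) + C i)" for i
      using pairs[of i] that by (intro mult_left_mono nonneg) (auto simp: ameso_pair1_def)
    then have "(\<Sum>i\<in>UNIV. a i * (f i (vmid_ceil x y $ i) + f i (vmid_floor x y $ i)))
        \<le> (\<Sum>i\<in>UNIV. a i * (f i (x $ i) + f i (y $ i) + C i))"
      by (rule sum_mono)
    then show ?thesis
      by (simp add: distrib_left sum.distrib)
  qed
  have "ameso_set ?B"
    using pairs by (intro ameso_set_box) (simp add: ameso_pair1_def)
  with bounded midpoint show ?thesis
    unfolding ameso_pair_def by (auto simp del: vmid_ceil_nth vmid_floor_nth)
qed

theorem mainTheorem9:
  fixes f :: "'n::finite \<Rightarrow> int \<Rightarrow> real" and a :: "'n \<Rightarrow> real"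
  assumes "\<And>i. \<exists>m. \<forall>z. m \<le> f i z"
    and "\<And>i. ameso_pair1 0 UNIV (f i)"
    and "\<And>i. a i \<ge> 0"
  shows "ameso_pair 0 (UNIV :: (int ^ 'n) set) (\<lambda>y. \<Sum>i\<in>UNIV. a i * f i (y $ i))"
  using ameso_pair_weighted_sum[where C = "\<lambda>_. 0" and D = "\<lambda>_. UNIV", OF assms(2,3)]
  by simp

end
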